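(* Let $W$ be a complex vector space. Every $\mathcal{S}_{trig}$-local subset of $\mathcal{E}(W)$ is compatible, and every quasi $\mathcal{S}_{trig}$-local subset of $\mathcal{E}(W)$ is quasi compatible.
   Context: $\mathcal{E}(W)=\mathrm{Hom}(W,W((x)))$; $\mathbb{C}(x)$ the rational function field; $\iota_{x_2,x_1}$ expansion in $\mathbb{C}((x_2))((x_1))$. $U\subset\mathcal{E}(W)$ is $\mathcal{S}_{trig}$-local if for any $a(x),b(x)\in U$ there exist $u_i(x),v_i(x)\in U$, $q_i(x)\in\mathbb{C}(x)$ ($i=1,\dots,r$), $k\in\mathbb{N}$ with $(x_1-x_2)^ka(x_1)b(x_2)=(x_1-x_2)^k\sum_i\iota_{x_2,x_1}(q_i(x_1/x_2))u_i(x_2)v_i(x_1)$; quasi $\mathcal{S}_{trig}$-local if instead $p(x_1/x_2)a(x_1)b(x_2)=p(x_1/x_2)\sum_i\iota_{x_2,x_1}(q_i(x_1/x_2))u_i(x_2)v_i(x_1)$ for some nonzero polynomial $p$. A finite sequence $a_1,\dots,a_r$ in $\mathcal{E}(W)$ is compatible if $\prod_{i<j}(x_i-x_j)^ka_1(x_1)\cdots a_r(x_r)\in\mathrm{Hom}(W,W((x_1,\dots,x_r)))$ for some $k\in\mathbb{N}$, quasi compatible if $\prod_{i<j}p(x_i,x_j)a_1(x_1)\cdots a_r(x_r)\in\mathrm{Hom}(W,W((x_1,\dots,x_r)))$ for some nonzero $p\in\mathbb{C}[[x,y]]$; a subset is (quasi) compatible if all its finite sequences are. *)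

theory Defs
  imports Main "HOL-Computational_Algebra.Formal_Laurent_Series"
begin

text \<open>
  W is a complex vector space, given as an additive group 'w with a
  scalar multiplication scale :: complex => 'w => 'w satisfying vector_space scale.
  An element a(x) of E(W) = Hom(W, W((x))) is encoded by its coefficient maps:
  a n is the coefficient of x^n (an endomorphism of W), a(x) w = sum_n (a n w) x^n.
  Formal series in several variables with values in W are encoded by their
  coefficient functions (on int exponents); products of series with scalar series
  are computed coefficientwise; the coefficient sums below are taken over the
  (in all relevant situations finite) support of the summand.
\<close>

type_synonym 'w fser = "int \<Rightarrow> 'w \<Rightarrow> 'w"

definition EW :: "(complex \<Rightarrow> 'w::ab_group_add \<Rightarrow> 'w) \<Rightarrow> 'w fser set" where
  "EW scale = {a. (\<forall>n. Vector_Spaces.linear scale scale (a n))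
                   \<and> (\<forall>w. \<exists>N. \<forall>n<N. a n w = 0)}"

text \<open>Coefficients of a(x1) b(x2) w, indexed by (exponent of x1, exponent of x2).\<close>
definition prod12 :: "'w fser \<Rightarrow> 'w fser \<Rightarrow> 'w \<Rightarrow> int \<Rightarrow> int \<Rightarrow> 'w" where
  "prod12 a b w m1 m2 = a m1 (b m2 w)"

text \<open>Coefficients of u(x2) v(x1) w, indexed by (exponent of x1, exponent of x2).\<close>
definition prod21 :: "'w fser \<Rightarrow> 'w fser \<Rightarrow> 'w \<Rightarrow> int \<Rightarrow> int \<Rightarrow> 'w" where
  "prod21 u v w m1 m2 = u m2 (v m1 w)"

text \<open>Multiplication of a W-valued series in x1,x2 by the scalar series
  sum c d1 d2 x1^d1 x2^d2.\<close>
definition mult2 :: "(complex \<Rightarrow> 'w::ab_group_add \<Rightarrow> 'w) \<Rightarrow> (int \<Rightarrow> int \<Rightarrow> complex)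
    \<Rightarrow> (int \<Rightarrow> int \<Rightarrow> 'w) \<Rightarrow> int \<Rightarrow> int \<Rightarrow> 'w" where
  "mult2 scale c G m1 m2 =
     (\<Sum>(d1,d2)\<in>{(d1,d2). c d1 d2 \<noteq> 0 \<and> G (m1 - d1) (m2 - d2) \<noteq> 0}.
        scale (c d1 d2) (G (m1 - d1) (m2 - d2)))"

text \<open>Coefficients of (x1 - x2)^k.\<close>
definition binom2 :: "nat \<Rightarrow> int \<Rightarrow> int \<Rightarrow> complex" where
  "binom2 k d1 d2 = (if 0 \<le> d1 \<and> 0 \<le> d2 \<and> d1 + d2 = int k
                     then (-1) ^ nat d2 * of_nat (k choose nat d2) else 0)"

text \<open>Coefficients of p(x1/x2) for a polynomial p.\<close>
definition polyz :: "complex poly \<Rightarrow> int \<Rightarrow> int \<Rightarrow> complex" where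
  "polyz p d1 d2 = (if 0 \<le> d1 \<and> d2 = - d1 then coeff p (nat d1) else 0)"

definition rat_expand :: "complex poly \<Rightarrow> complex poly \<Rightarrow> complex fls" where
  "rat_expand f g = fps_to_fls (fps_of_poly f) / fps_to_fls (fps_of_poly g)"

text \<open>Coefficients of iota_{x2,x1}(q(x1/x2)) in C((x2))((x1)), q = f/g:
  if q(z) = sum c_n z^n (Laurent expansion at 0) this is sum c_n x1^n x2^(-n).\<close>
definition iota21 :: "complex poly \<Rightarrow> complex poly \<Rightarrow> int \<Rightarrow> int \<Rightarrow> complex" where
  "iota21 f g d1 d2 = (if d2 = - d1 then fls_nth (rat_expand f g) d1 else 0)"

text \<open>S_trig-locality.  A rational function q_i is given as f i / g i with g i nonzero.\<close>
definition strig_local :: "(complex \<Rightarrow> 'w::ab_group_add \<Rightarrow> 'w) \<Rightarrow> 'w fser set \<Rightarrow> bool" where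
  "strig_local scale U \<longleftrightarrow>
    (\<forall>a\<in>U. \<forall>b\<in>U. \<exists>(r::nat) (u::nat \<Rightarrow> 'w fser) (v::nat \<Rightarrow> 'w fser)
        (f::nat \<Rightarrow> complex poly) (g::nat \<Rightarrow> complex poly) (k::nat).
       (\<forall>i<r. u i \<in> U \<and> v i \<in> U \<and> g i \<noteq> 0) \<and>
       (\<forall>w m1 m2. mult2 scale (binom2 k) (prod12 a b w) m1 m2 =
           mult2 scale (binom2 k)
             (\<lambda>n1 n2. \<Sum>i<r. mult2 scale (iota21 (f i) (g i)) (prod21 (u i) (v i) w) n1 n2)
             m1 m2))"

definition quasi_strig_local :: "(complex \<Rightarrow> 'w::ab_group_add \<Rightarrow> 'w) \<Rightarrow> 'w fser set \<Rightarrow> bool" where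
  "quasi_strig_local scale U \<longleftrightarrow>
    (\<forall>a\<in>U. \<forall>b\<in>U. \<exists>(p::complex poly) (r::nat) (u::nat \<Rightarrow> 'w fser) (v::nat \<Rightarrow> 'w fser)
        (f::nat \<Rightarrow> complex poly) (g::nat \<Rightarrow> complex poly).
       p \<noteq> 0 \<and>
       (\<forall>i<r. u i \<in> U \<and> v i \<in> U \<and> g i \<noteq> 0) \<and>
       (\<forall>w m1 m2. mult2 scale (polyz p) (prod12 a b w) m1 m2 =
           mult2 scale (polyz p)
             (\<lambda>n1 n2. \<Sum>i<r. mult2 scale (iota21 (f i) (g i)) (prod21 (u i) (v i) w) n1 n2)
             m1 m2))"

text \<open>Several variables x_0,...,x_(r-1): series are functions of exponent lists of
  length r.  Coefficients of a_0(x_0) ... a_(r-1)(x_(r-1)) w.\<close>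
definition prodr :: "'w fser list \<Rightarrow> 'w \<Rightarrow> int list \<Rightarrow> 'w" where
  "prodr as w ns = foldr (\<lambda>(a, n) v. a n v) (zip as ns) w"

text \<open>Multiplication by the scalar series sum c d1 d2 x_i^d1 x_j^d2.\<close>
definition mult_pair :: "(complex \<Rightarrow> 'w::ab_group_add \<Rightarrow> 'w) \<Rightarrow> (int \<Rightarrow> int \<Rightarrow> complex)
    \<Rightarrow> nat \<Rightarrow> nat \<Rightarrow> (int list \<Rightarrow> 'w) \<Rightarrow> int list \<Rightarrow> 'w" where
  "mult_pair scale c i j G ns =
     (\<Sum>(d1,d2)\<in>{(d1,d2). c d1 d2 \<noteq> 0 \<and> G (ns[i := ns ! i - d1, j := ns ! j - d2]) \<noteq> 0}.
        scale (c d1 d2) (G (ns[i := ns ! i - d1, j := ns ! j - d2])))"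

text \<open>Multiplication by prod_{i<j<r} c(x_i, x_j).\<close>
definition mult_all_pairs :: "(complex \<Rightarrow> 'w::ab_group_add \<Rightarrow> 'w) \<Rightarrow> (int \<Rightarrow> int \<Rightarrow> complex)
    \<Rightarrow> nat \<Rightarrow> (int list \<Rightarrow> 'w) \<Rightarrow> int list \<Rightarrow> 'w" where
  "mult_all_pairs scale c r G =
     fold (\<lambda>(i, j) H. mult_pair scale c i j H) [(i, j). i \<leftarrow> [0..<r], j \<leftarrow> [Suc i..<r]] G"

text \<open>Membership in W((x_0,...,x_(r-1))) for every w: a uniform lower bound on all exponents.\<close>
definition lower_trunc :: "nat \<Rightarrow> ('w \<Rightarrow> int list \<Rightarrow> 'w::zero) \<Rightarrow> bool" where
  "lower_trunc r F \<longleftrightarrow> (\<forall>w. \<exists>N. \<forall>ns. length ns = r \<longrightarrow> (\<exists>i<r. ns ! i < N) \<longrightarrow> F w ns = 0)"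

definition compatible_seq :: "(complex \<Rightarrow> 'w::ab_group_add \<Rightarrow> 'w) \<Rightarrow> 'w fser list \<Rightarrow> bool" where
  "compatible_seq scale as \<longleftrightarrow>
    (\<exists>k::nat. lower_trunc (length as)
        (\<lambda>w. mult_all_pairs scale (binom2 k) (length as) (prodr as w)))"

text \<open>Power series p in C[[x,y]], given by its coefficients p a b of x^a y^b.\<close>
definition pser2 :: "(nat \<Rightarrow> nat \<Rightarrow> complex) \<Rightarrow> int \<Rightarrow> int \<Rightarrow> complex" where
  "pser2 p d1 d2 = (if 0 \<le> d1 \<and> 0 \<le> d2 then p (nat d1) (nat d2) else 0)"

definition quasi_compatible_seq :: "(complex \<Rightarrow> 'w::ab_group_add \<Rightarrow> 'w) \<Rightarrow> 'w fser list \<Rightarrow> bool" where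
  "quasi_compatible_seq scale as \<longleftrightarrow>
    (\<exists>p::nat \<Rightarrow> nat \<Rightarrow> complex. (\<exists>a b. p a b \<noteq> 0) \<and> lower_trunc (length as)
        (\<lambda>w. mult_all_pairs scale (pser2 p) (length as) (prodr as w)))"

definition compatible_set :: "(complex \<Rightarrow> 'w::ab_group_add \<Rightarrow> 'w) \<Rightarrow> 'w fser set \<Rightarrow> bool" where
  "compatible_set scale U \<longleftrightarrow> (\<forall>as. set as \<subseteq> U \<longrightarrow> compatible_seq scale as)"

definition quasi_compatible_set :: "(complex \<Rightarrow> 'w::ab_group_add \<Rightarrow> 'w) \<Rightarrow> 'w fser set \<Rightarrow> bool" where
  "quasi_compatible_set scale U \<longleftrightarrow> (\<forall>as. set as \<subseteq> U \<longrightarrow> quasi_compatible_seq scale as)"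

end

theory Submission
  imports Defs
begin

text \<open>
  Induction on the length of a_1, ..., a_r: after multiplication by enough factors c(x_i, x_j)
  the product a_1(x_1) ... a_r(x_r) w is lower truncated in every variable.  Truncation in
  x_2, ..., x_r comes from the tail a_2, ..., a_r.  For x_1, locality rewrites
  c(x_1, x_2) a_1(x_1) a_2(x_2) as c(x_1, x_2) sum_k iota(q_k(x_1/x_2)) u_k(x_2) v_k(x_1); by
  induction v_k(x_1) a_3(x_3) ... a_r(x_r) w is truncated in x_1 once multiplied by the
  factors c(x_1, x_j), and this survives multiplication by iota(q_k(x_1/x_2)), which only
  involves monomials x_1^n x_2^(-n) with n bounded below.  The multipliers (x_1 - x_2)^k,
  resp. p(x_1/x_2), form a directed family under multiplication, so one common multiplier
  serves for all the finitely many exchanges; in the quasi case p(x_1/x_2) is finally made a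
  power series by the factor x_2^(deg p).
\<close>

section \<open>Series in several variables\<close>

definition support2 :: "(int \<Rightarrow> int \<Rightarrow> 'a::zero) \<Rightarrow> (int \<times> int) set" where
  "support2 c = {d. c (fst d) (snd d) \<noteq> 0}"

definition conv2 :: "(int \<Rightarrow> int \<Rightarrow> 'a::semiring_0) \<Rightarrow> (int \<Rightarrow> int \<Rightarrow> 'a) \<Rightarrow> int \<Rightarrow> int \<Rightarrow> 'a" where
  "conv2 c c' f1 f2 = (\<Sum>d\<in>support2 c. c (fst d) (snd d) * c' (f1 - fst d) (f2 - snd d))"

lemma conv2_superset:
  assumes "finite T" "support2 c \<subseteq> T"
  shows "conv2 c c' f1 f2 = (\<Sum>d\<in>T. c (fst d) (snd d) * c' (f1 - fst d) (f2 - snd d))"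
  unfolding conv2_def
  by (rule sum.mono_neutral_left) (use assms in \<open>auto simp: support2_def\<close>)

lemma support2_conv2_subset:
  "support2 (conv2 c c') \<subseteq> (\<lambda>(d, e). (fst d + fst e, snd d + snd e)) ` (support2 c \<times> support2 c')"
proof
  fix f assume "f \<in> support2 (conv2 c c')"
  then have "(\<Sum>d\<in>support2 c. c (fst d) (snd d) * c' (fst f - fst d) (snd f - snd d)) \<noteq> 0"
    by (simp add: support2_def conv2_def)
  then obtain d where d: "d \<in> support2 c" "c' (fst f - fst d) (snd f - snd d) \<noteq> 0"
    by (metis (no_types, lifting) mult_zero_right sum.neutral)
  then show "f \<in> (\<lambda>(d, e). (fst d + fst e, snd d + snd e)) ` (support2 c \<times> support2 c')"
    by (intro image_eqI[of _ _ "(d, (fst f - fst d, snd f - snd d))"]) (auto simp: support2_def)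
qed

lemma finite_support2_conv2:
  "finite (support2 c) \<Longrightarrow> finite (support2 c') \<Longrightarrow> finite (support2 (conv2 c c'))"
  by (rule finite_subset[OF support2_conv2_subset]) auto

lemma support2_neg_bound:
  assumes "finite (support2 c)"
  shows "\<exists>D\<ge>0. \<forall>d\<in>support2 c. - fst d \<le> D \<and> - snd d \<le> D"
proof -
  let ?A = "insert 0 ((\<lambda>d. max (- fst d) (- snd d)) ` support2 c)"
  have "finite ?A" using assms by simp
  then have "max (- fst d) (- snd d) \<le> Max ?A" if "d \<in> support2 c" for d
    using that by (intro Max_ge) auto
  moreover have "0 \<le> Max ?A" using \<open>finite ?A\<close> by (intro Max_ge) auto
  ultimately show ?thesis
    by (intro exI[of _ "Max ?A"]) fastforce
qed

lemma finite_common_bound: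
  fixes P :: "'a \<Rightarrow> int \<Rightarrow> bool"
  assumes "finite T" "\<forall>t\<in>T. \<exists>N. P t N" "\<And>t N N'. N' \<le> N \<Longrightarrow> P t N \<Longrightarrow> P t N'"
  shows "\<exists>N. \<forall>t\<in>T. P t N"
proof -
  have "\<forall>t\<in>T. eventually (P t) at_bot"
    using assms(2,3) by (fastforce simp: eventually_at_bot_linorder)
  then have "eventually (\<lambda>N. \<forall>t\<in>T. P t N) at_bot"
    by (rule eventually_ball_finite[OF assms(1)])
  then show ?thesis
    by (auto simp: eventually_at_bot_linorder)
qed

text \<open>shift_exp2 ns i j (d1, d2) are the exponents of the coefficient of G that is paired with
  the monomial x_i^d1 x_j^d2 when forming the coefficient ns of a product.\<close>

definition shift_exp :: "int list \<Rightarrow> nat \<Rightarrow> int \<Rightarrow> int list" where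
  "shift_exp ns i d = ns[i := ns ! i - d]"

definition shift_exp2 :: "int list \<Rightarrow> nat \<Rightarrow> nat \<Rightarrow> int \<times> int \<Rightarrow> int list" where
  "shift_exp2 ns i j d = shift_exp (shift_exp ns i (fst d)) j (snd d)"

lemma length_shift_exp [simp]: "length (shift_exp ns i d) = length ns"
  by (simp add: shift_exp_def)

lemma length_shift_exp2 [simp]: "length (shift_exp2 ns i j d) = length ns"
  by (simp add: shift_exp2_def)

lemma nth_shift_exp: "shift_exp ns i d ! l = (if l = i \<and> i < length ns then ns ! l - d else ns ! l)"
  by (auto simp: shift_exp_def nth_list_update list_update_beyond)

lemma shift_exp_commute: "shift_exp (shift_exp ns i a) k b = shift_exp (shift_exp ns k b) i a"
  by (rule nth_equalityI) (auto simp: nth_shift_exp)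

lemma shift_exp_shift_exp: "shift_exp (shift_exp ns i a) i b = shift_exp ns i (a + b)"
  by (rule nth_equalityI) (auto simp: nth_shift_exp)

lemma shift_exp2_commute: "shift_exp2 (shift_exp2 ns i j d) k l e = shift_exp2 (shift_exp2 ns k l e) i j d"
  unfolding shift_exp2_def by (metis shift_exp_commute)

lemma shift_exp2_shift_exp2:
  "shift_exp2 (shift_exp2 ns i j d) i j e = shift_exp2 ns i j (fst d + fst e, snd d + snd e)"
  unfolding shift_exp2_def by (metis shift_exp_commute shift_exp_shift_exp fst_conv snd_conv)

lemma shift_exp2_zero [simp]: "shift_exp2 ns i j (0, 0) = ns"
  by (simp add: shift_exp2_def shift_exp_def)

lemma shift_exp2_Nil [simp]: "shift_exp2 [] i j d = []"
  by (simp add: shift_exp2_def shift_exp_def)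

lemma shift_exp2_Cons_Suc: "shift_exp2 (n # ns) (Suc i) (Suc j) d = n # shift_exp2 ns i j d"
  by (simp add: shift_exp2_def shift_exp_def)

lemma nth_shift_exp2_le:
  assumes "- fst d \<le> D" "- snd d \<le> D" "0 \<le> D"
  shows "shift_exp2 ns i j d ! l \<le> ns ! l + 2 * D"
  using assms by (auto simp: shift_exp2_def nth_shift_exp)

definition index_pairs :: "nat \<Rightarrow> (nat \<times> nat) list" where
  "index_pairs r = [(i, j). i \<leftarrow> [0..<r], j \<leftarrow> [Suc i..<r]]"

lemma index_pairs_Suc:
  "index_pairs (Suc r) =
     map (\<lambda>j. (0, j)) [1..<Suc r] @ map (\<lambda>p. (Suc (fst p), Suc (snd p))) (index_pairs r)"
proof -
  have "[0..<Suc r] = 0 # map Suc [0..<r]"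
    by (simp add: map_Suc_upt upt_conv_Cons del: upt_Suc)
  moreover have "[Suc (Suc i)..<Suc r] = map Suc [Suc i..<r]" for i
    by (simp add: map_Suc_upt del: upt_Suc)
  ultimately show ?thesis
    unfolding index_pairs_def by (simp add: map_concat comp_def del: upt_Suc)
qed

lemma index_pairs_less: "p \<in> set (index_pairs r) \<Longrightarrow> fst p < snd p \<and> snd p < r"
  unfolding index_pairs_def by (cases p) (force simp: set_concat)

definition trunc_at :: "nat \<Rightarrow> nat \<Rightarrow> (int list \<Rightarrow> 'w::zero) \<Rightarrow> bool" where
  "trunc_at r l G \<longleftrightarrow> (\<exists>N. \<forall>ns. length ns = r \<longrightarrow> ns ! l < N \<longrightarrow> G ns = 0)"

definition agree_len :: "nat \<Rightarrow> (int list \<Rightarrow> 'w) \<Rightarrow> (int list \<Rightarrow> 'w) \<Rightarrow> bool" where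
  "agree_len r G H \<longleftrightarrow> (\<forall>ns. length ns = r \<longrightarrow> G ns = H ns)"

lemma agree_len_sym: "agree_len r G H \<Longrightarrow> agree_len r H G"
  by (auto simp: agree_len_def)

lemma trunc_at_agree_len: "agree_len r G H \<Longrightarrow> trunc_at r l G \<Longrightarrow> trunc_at r l H"
  by (auto simp: agree_len_def trunc_at_def)

lemma trunc_at_sum:
  assumes "finite K" "\<forall>k\<in>K. trunc_at r l (G k)"
  shows "trunc_at r l (\<lambda>ns. \<Sum>k\<in>K. G k ns)"
proof -
  have "\<exists>N. \<forall>k\<in>K. \<forall>ns. length ns = r \<longrightarrow> ns ! l < N \<longrightarrow> G k ns = 0"
    by (rule finite_common_bound[OF assms(1)]) (use assms(2) in \<open>auto simp: trunc_at_def\<close>)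
  then obtain N where "\<forall>k\<in>K. \<forall>ns. length ns = r \<longrightarrow> ns ! l < N \<longrightarrow> G k ns = 0"
    by blast
  then show ?thesis unfolding trunc_at_def by (intro exI[of _ N]) simp
qed

lemma lower_trunc_iff_trunc_at: "lower_trunc r F \<longleftrightarrow> (\<forall>w. \<forall>l<r. trunc_at r l (F w))"
proof
  assume "\<forall>w. \<forall>l<r. trunc_at r l (F w)"
  then have "\<exists>N. \<forall>l\<in>{..<r}. \<forall>ns. length ns = r \<longrightarrow> ns ! l < N \<longrightarrow> F w ns = 0" for w
    by (intro finite_common_bound) (auto simp: trunc_at_def)
  then show "lower_trunc r F"
    unfolding lower_trunc_def by fastforce
qed (fastforce simp: lower_trunc_def trunc_at_def)

definition head_trunc :: "nat \<Rightarrow> (int list \<Rightarrow> 'w::zero) \<Rightarrow> bool" where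
  "head_trunc n X \<longleftrightarrow> (\<forall>t. length t = n \<longrightarrow> (\<exists>N. \<forall>a<N. X (a # t) = 0))"

definition antidiag_bounded_below :: "(int \<Rightarrow> int \<Rightarrow> complex) \<Rightarrow> bool" where
  "antidiag_bounded_below q \<longleftrightarrow> (\<exists>L. \<forall>d1 d2. q d1 d2 \<noteq> 0 \<longrightarrow> d2 = - d1 \<and> L \<le> d1)"

text \<open>Like mult_pair, but summing over the whole support of c: meaningful only for finitely
  supported c (an infinite sum is 0).\<close>

definition mult_at :: "(complex \<Rightarrow> 'w::ab_group_add \<Rightarrow> 'w) \<Rightarrow> (int \<Rightarrow> int \<Rightarrow> complex)
    \<Rightarrow> nat \<Rightarrow> nat \<Rightarrow> (int list \<Rightarrow> 'w) \<Rightarrow> int list \<Rightarrow> 'w" where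
  "mult_at s c i j G ns = (\<Sum>d\<in>support2 c. s (c (fst d) (snd d)) (G (shift_exp2 ns i j d)))"

definition mult_at_list :: "(complex \<Rightarrow> 'w::ab_group_add \<Rightarrow> 'w) \<Rightarrow> (int \<Rightarrow> int \<Rightarrow> complex)
    \<Rightarrow> (nat \<times> nat) list \<Rightarrow> (int list \<Rightarrow> 'w) \<Rightarrow> int list \<Rightarrow> 'w" where
  "mult_at_list s c ps G = fold (\<lambda>p H. mult_at s c (fst p) (snd p) H) ps G"

lemma mult_at_list_Nil [simp]: "mult_at_list s c [] G = G"
  by (simp add: mult_at_list_def)

lemma mult_at_list_Cons [simp]:
  "mult_at_list s c (p # ps) G = mult_at_list s c ps (mult_at s c (fst p) (snd p) G)"
  by (simp add: mult_at_list_def)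

lemma mult_at_list_append: "mult_at_list s c (ps @ qs) G = mult_at_list s c qs (mult_at_list s c ps G)"
  by (simp add: mult_at_list_def)

definition mult_head_pairs :: "(complex \<Rightarrow> 'w::ab_group_add \<Rightarrow> 'w) \<Rightarrow> (int \<Rightarrow> int \<Rightarrow> complex)
    \<Rightarrow> nat \<Rightarrow> (int list \<Rightarrow> 'w) \<Rightarrow> int list \<Rightarrow> 'w" where
  "mult_head_pairs s c r G = mult_at_list s c (map (\<lambda>j. (0, j)) [1..<r]) G"

lemma mult_head_pairs_Suc_Suc:
  "mult_head_pairs s c (Suc (Suc n)) G =
    mult_at_list s c (map (\<lambda>j. (0, Suc j)) [1..<Suc n]) (mult_at s c 0 1 G)"
proof -
  have "[1..<Suc (Suc n)] = 1 # map Suc [1..<Suc n]"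
    by (simp add: upt_conv_Cons map_Suc_upt del: upt_Suc)
  then show ?thesis by (simp add: mult_head_pairs_def comp_def del: upt_Suc)
qed

lemma mult_index_pairs_Suc:
  "mult_at_list s c (index_pairs (Suc r)) G =
     mult_at_list s c (map (\<lambda>p. (Suc (fst p), Suc (snd p))) (index_pairs r)) (mult_head_pairs s c (Suc r) G)"
  by (simp add: mult_head_pairs_def index_pairs_Suc mult_at_list_append)

definition act_head :: "'w fser \<Rightarrow> (int list \<Rightarrow> 'w) \<Rightarrow> int list \<Rightarrow> 'w::zero" where
  "act_head a Y ns = (case ns of [] \<Rightarrow> 0 | n # t \<Rightarrow> a n (Y t))"

lemma prodr_Cons [simp]: "prodr (a # as) w (n # ns) = a n (prodr as w ns)"
  by (simp add: prodr_def)

lemma prodr_Nil [simp]: "prodr [] w ns = w"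
  by (simp add: prodr_def)

text \<open>q(x_0, x_1) u(x_1) X(x_0, x_2, ..., x_r): the result of exchanging a(x_0) b(x_1)
  for u(x_1) v(x_0) in a product a(x_0) b(x_1) Y, where X = v(x_0) Y.\<close>

definition act_second :: "(complex \<Rightarrow> 'w::ab_group_add \<Rightarrow> 'w) \<Rightarrow> 'w fser \<Rightarrow> (int \<Rightarrow> int \<Rightarrow> complex)
    \<Rightarrow> (int list \<Rightarrow> 'w) \<Rightarrow> int list \<Rightarrow> 'w" where
  "act_second s u q X ns = mult2 s q (\<lambda>a b. u b (X (a # drop 2 ns))) (ns ! 0) (ns ! 1)"

locale complex_vector_space = vector_space scale for scale :: "complex \<Rightarrow> 'w::ab_group_add \<Rightarrow> 'w"
begin

lemma mult_all_pairs_eq_mult_at_list: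
  assumes "finite (support2 c)"
  shows "mult_all_pairs scale c r G = mult_at_list scale c (index_pairs r) G"
proof -
  have "mult_pair scale c i j H ns = mult_at scale c i j H ns" if "i \<noteq> j" for i j H ns
  proof -
    have "ns[i := ns ! i - d1, j := ns ! j - d2] = shift_exp2 ns i j (d1, d2)" for d1 d2
      using that by (simp add: shift_exp2_def shift_exp_def nth_list_update)
    then show ?thesis
      unfolding mult_pair_def mult_at_def
      by (intro sum.mono_neutral_cong_left) (use assms in \<open>auto simp: support2_def\<close>)
  qed
  then show ?thesis
    unfolding mult_all_pairs_def index_pairs_def[symmetric] mult_at_list_def
    by (intro fold_cong) (auto intro!: ext dest!: index_pairs_less)
qed

lemma mult2_antidiag:
  assumes q: "\<forall>d1 d2. q d1 d2 \<noteq> 0 \<longrightarrow> d2 = - d1 \<and> L \<le> d1"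
    and K: "\<forall>e b. M < e \<longrightarrow> K (m0 - e) b = 0"
  shows "mult2 scale q K m0 m1 = (\<Sum>e\<in>{L..M}. scale (q e (- e)) (K (m0 - e) (m1 + e)))"
proof -
  let ?h = "\<lambda>e::int. (e, - e)"
  let ?A = "{(d1, d2). q d1 d2 \<noteq> 0 \<and> K (m0 - d1) (m1 - d2) \<noteq> 0}"
  let ?f = "\<lambda>(d1, d2). scale (q d1 d2) (K (m0 - d1) (m1 - d2))"
  have "?A \<subseteq> ?h ` {L..M}"
  proof
    fix d assume "d \<in> ?A"
    then obtain d1 d2 where d: "d = (d1, d2)" "q d1 d2 \<noteq> 0" "K (m0 - d1) (m1 - d2) \<noteq> 0"
      by auto
    moreover have "d1 \<le> M" using K d by (metis not_le)
    ultimately show "d \<in> ?h ` {L..M}" using q by auto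
  qed
  then have "mult2 scale q K m0 m1 = sum ?f (?h ` {L..M})"
    unfolding mult2_def by (intro sum.mono_neutral_left) auto
  also have "\<dots> = (\<Sum>e\<in>{L..M}. scale (q e (- e)) (K (m0 - e) (m1 + e)))"
    by (subst sum.reindex) (auto simp: inj_on_def)
  finally show ?thesis .
qed

lemma linear_sum_scale:
  assumes "Vector_Spaces.linear scale scale f"
  shows "f (\<Sum>k\<in>K. scale (c k) (x k)) = (\<Sum>k\<in>K. scale (c k) (f (x k)))"
proof -
  have "module_hom scale scale f" using assms by (simp add: module_hom_iff_linear)
  then show ?thesis by (simp add: module_hom.sum module_hom.scale)
qed

lemma linear_zero:
  assumes "Vector_Spaces.linear scale scale f"
  shows "f 0 = 0"
proof -
  have "module_hom scale scale f" using assms by (simp add: module_hom_iff_linear)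
  then show ?thesis by (rule module_hom.zero)
qed

lemma mult_at_superset:
  assumes "finite T" "support2 c \<subseteq> T"
  shows "mult_at scale c i j G ns = (\<Sum>d\<in>T. scale (c (fst d) (snd d)) (G (shift_exp2 ns i j d)))"
  unfolding mult_at_def
  by (rule sum.mono_neutral_left) (use assms in \<open>auto simp: support2_def\<close>)

lemma mult_at_01_eq_mult2:
  assumes "finite (support2 c)"
  shows "mult_at scale c 0 1 G (m1 # m2 # t) = mult2 scale c (\<lambda>a b. G (a # b # t)) m1 m2"
proof -
  have "shift_exp2 (m1 # m2 # t) 0 1 d = (m1 - fst d) # (m2 - snd d) # t" for d
    by (simp add: shift_exp2_def shift_exp_def)
  then show ?thesis
    unfolding mult2_def mult_at_def
    by (intro sum.mono_neutral_cong_right) (use assms in \<open>auto simp: support2_def\<close>)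
qed

lemma mult_at_commute:
  "mult_at scale c i j (mult_at scale c' k l G) = mult_at scale c' k l (mult_at scale c i j G)"
proof
  fix ns
  show "mult_at scale c i j (mult_at scale c' k l G) ns = mult_at scale c' k l (mult_at scale c i j G) ns"
    unfolding mult_at_def scale_sum_right scale_scale
    by (subst sum.swap) (simp add: shift_exp2_commute mult.commute)
qed

lemma mult_at_mult_at:
  assumes "finite (support2 c)" "finite (support2 c')"
  shows "mult_at scale c i j (mult_at scale c' i j G) = mult_at scale (conv2 c c') i j G"
proof
  fix ns
  let ?S = "support2 c" and ?S' = "support2 c'"
  let ?add = "\<lambda>d e. (fst d + fst e, snd d + snd e) :: int \<times> int"
  define T where "T = (\<lambda>(d, e). ?add d e) ` (?S \<times> ?S')"
  have fT: "finite T" unfolding T_def using assms by auto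
  let ?g = "\<lambda>d f. scale (c (fst d) (snd d) * c' (fst f - fst d) (snd f - snd d)) (G (shift_exp2 ns i j f))"
  have inner: "(\<Sum>f\<in>T. ?g d f) =
      (\<Sum>e\<in>?S'. scale (c (fst d) (snd d) * c' (fst e) (snd e)) (G (shift_exp2 (shift_exp2 ns i j d) i j e)))"
    if d: "d \<in> ?S" for d
  proof -
    have inj: "inj_on (?add d) ?S'" by (auto simp: inj_on_def prod_eq_iff)
    have "?add d ` ?S' \<subseteq> T" using d unfolding T_def by force
    moreover have "?g d f = 0" if "f \<in> T - ?add d ` ?S'" for f
    proof -
      have "(fst f - fst d, snd f - snd d) \<notin> ?S'" using that by (force simp: image_iff)
      then show ?thesis by (simp add: support2_def)
    qed
    ultimately have "(\<Sum>f\<in>T. ?g d f) = (\<Sum>f\<in>?add d ` ?S'. ?g d f)"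
      by (intro sum.mono_neutral_right[OF fT]) auto
    then show ?thesis by (simp add: sum.reindex[OF inj] shift_exp2_shift_exp2)
  qed
  have "mult_at scale (conv2 c c') i j G ns = (\<Sum>f\<in>T. scale (conv2 c c' (fst f) (snd f)) (G (shift_exp2 ns i j f)))"
    using support2_conv2_subset[of c c'] by (intro mult_at_superset[OF fT]) (auto simp: T_def)
  also have "\<dots> = (\<Sum>d\<in>?S. \<Sum>f\<in>T. ?g d f)"
    by (simp add: conv2_def scale_sum_left sum.swap[of _ T])
  also have "\<dots> = mult_at scale c i j (mult_at scale c' i j G) ns"
    unfolding mult_at_def scale_sum_right scale_scale by (simp add: inner mult.commute)
  finally show "mult_at scale c i j (mult_at scale c' i j G) ns = mult_at scale (conv2 c c') i j G ns" ..
qed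

lemma trunc_at_mult_at:
  assumes "finite (support2 c)" "trunc_at r l G"
  shows "trunc_at r l (mult_at scale c i j G)"
proof -
  obtain D where D: "D \<ge> 0" "\<forall>d\<in>support2 c. - fst d \<le> D \<and> - snd d \<le> D"
    using support2_neg_bound[OF assms(1)] by blast
  obtain N where N: "\<forall>ns. length ns = r \<longrightarrow> ns ! l < N \<longrightarrow> G ns = 0"
    using assms(2) by (auto simp: trunc_at_def)
  have "mult_at scale c i j G ns = 0" if ns: "length ns = r" "ns ! l < N - 2 * D" for ns
  proof -
    have "G (shift_exp2 ns i j d) = 0" if "d \<in> support2 c" for d
      using nth_shift_exp2_le[of d D ns i j l] D that N ns by auto
    then show ?thesis by (simp add: mult_at_def)
  qed
  then show ?thesis unfolding trunc_at_def by blast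
qed

lemma trunc_at_mult_at_list:
  "finite (support2 c) \<Longrightarrow> trunc_at r l G \<Longrightarrow> trunc_at r l (mult_at_list scale c ps G)"
  by (induction ps arbitrary: G) (auto intro: trunc_at_mult_at)

lemma agree_len_mult_at: "agree_len r G H \<Longrightarrow> agree_len r (mult_at scale c i j G) (mult_at scale c i j H)"
  by (auto simp: agree_len_def mult_at_def)

lemma agree_len_mult_at_list:
  "agree_len r G H \<Longrightarrow> agree_len r (mult_at_list scale c ps G) (mult_at_list scale c ps H)"
  by (induction ps arbitrary: G H) (auto intro: agree_len_mult_at)

lemma mult_at_list_sum:
  "mult_at_list scale c ps (\<lambda>ns. \<Sum>k\<in>K. G k ns) = (\<lambda>ns. \<Sum>k\<in>K. mult_at_list scale c ps (G k) ns)"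
proof (induction ps arbitrary: G)
  case (Cons p ps)
  have "mult_at scale c i j (\<lambda>ns. \<Sum>k\<in>K. G k ns) = (\<lambda>ns. \<Sum>k\<in>K. mult_at scale c i j (G k) ns)" for i j
    unfolding mult_at_def scale_sum_right by (rule ext, rule sum.swap)
  then show ?case by (simp add: Cons)
qed simp

lemma mult_at_mult_at_list_commute:
  "mult_at scale c i j (mult_at_list scale c' ps G) = mult_at_list scale c' ps (mult_at scale c i j G)"
  by (induction ps arbitrary: G) (simp_all add: mult_at_commute)

lemma mult_at_list_commute:
  "mult_at_list scale c ps (mult_at_list scale c' qs G) = mult_at_list scale c' qs (mult_at_list scale c ps G)"
  by (induction ps arbitrary: G) (simp_all add: mult_at_mult_at_list_commute)

lemma mult_at_list_mult_at_list:
  assumes "finite (support2 c)" "finite (support2 c')"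
  shows "mult_at_list scale c ps (mult_at_list scale c' ps G) = mult_at_list scale (conv2 c c') ps G"
proof (induction ps arbitrary: G)
  case (Cons p ps)
  then show ?case
    by (simp add: mult_at_mult_at_list_commute mult_at_mult_at[OF assms, symmetric])
qed simp

lemma mult_at_Suc_act_head:
  assumes "\<forall>n. Vector_Spaces.linear scale scale (a n)"
  shows "mult_at scale c (Suc i) (Suc j) (act_head a Y) = act_head a (mult_at scale c i j Y)"
proof
  fix ns :: "int list"
  show "mult_at scale c (Suc i) (Suc j) (act_head a Y) ns = act_head a (mult_at scale c i j Y) ns"
    by (cases ns)
       (simp_all add: mult_at_def act_head_def shift_exp2_Cons_Suc linear_sum_scale[OF assms[rule_format]])
qed

lemma mult_at_list_Suc_act_head:
  assumes "\<forall>n. Vector_Spaces.linear scale scale (a n)"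
  shows "mult_at_list scale c (map (\<lambda>p. (Suc (fst p), Suc (snd p))) ps) (act_head a Y) =
    act_head a (mult_at_list scale c ps Y)"
  by (induction ps arbitrary: Y) (simp_all add: mult_at_Suc_act_head[OF assms])

lemma trunc_at_act_head:
  assumes "\<forall>n. Vector_Spaces.linear scale scale (a n)" "trunc_at r l Z"
  shows "trunc_at (Suc r) (Suc l) (act_head a Z)"
proof -
  obtain N where N: "\<forall>ns. length ns = r \<longrightarrow> ns ! l < N \<longrightarrow> Z ns = 0"
    using assms(2) by (auto simp: trunc_at_def)
  have "act_head a Z (n # t) = 0" if "length t = r" "t ! l < N" for n t
    using that N linear_zero assms(1) by (simp add: act_head_def)
  then show ?thesis
    unfolding trunc_at_def by (metis length_Suc_conv nth_Cons_Suc)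
qed

section \<open>Exchanging the first two factors\<close>

lemma trunc_at_prodr_single:
  assumes "a \<in> EW scale"
  shows "trunc_at 1 0 (prodr [a] w)"
proof -
  obtain N where "\<forall>n<N. a n w = 0" using assms unfolding EW_def by blast
  then show ?thesis unfolding trunc_at_def by (intro exI[of _ N]) (auto simp: length_Suc_conv)
qed

lemma head_trunc_prodr:
  assumes "v \<in> EW scale"
  shows "head_trunc n (prodr (v # rest) w)"
  using assms by (auto simp: head_trunc_def EW_def)

lemma head_trunc_shift_bound:
  assumes c: "finite (support2 c)" and X: "head_trunc n X" and t: "length t = n"
  shows "\<exists>N. \<forall>d\<in>support2 c. \<forall>a<N. X ((a - fst d) # shift_exp t j (snd d)) = 0"
proof -
  obtain D where D: "\<forall>d\<in>support2 c. - fst d \<le> D"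
    using support2_neg_bound[OF c] by blast
  have "\<exists>N. \<forall>t'\<in>(\<lambda>d. shift_exp t j (snd d)) ` support2 c. \<forall>a<N. X (a # t') = 0"
    by (rule finite_common_bound) (use c X t in \<open>auto simp: head_trunc_def\<close>)
  then obtain N where "\<forall>d\<in>support2 c. \<forall>a<N. X (a # shift_exp t j (snd d)) = 0"
    by auto
  then have "\<forall>d\<in>support2 c. \<forall>a<N - D. X ((a - fst d) # shift_exp t j (snd d)) = 0"
    using D by force
  then show ?thesis by blast
qed

lemma head_trunc_mult_at:
  assumes c: "finite (support2 c)" and X: "head_trunc n X"
  shows "head_trunc n (mult_at scale c 0 (Suc j) X)"
  unfolding head_trunc_def
proof (intro allI impI)
  fix t :: "int list" assume "length t = n"
  then obtain N where N: "\<forall>d\<in>support2 c. \<forall>a<N. X ((a - fst d) # shift_exp t j (snd d)) = 0"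
    using head_trunc_shift_bound[OF c X] by blast
  have "shift_exp2 (a # t) 0 (Suc j) d = (a - fst d) # shift_exp t j (snd d)" for a d
    by (simp add: shift_exp2_def shift_exp_def)
  then have "mult_at scale c 0 (Suc j) X (a # t) = 0" if "a < N" for a
    using N that by (simp add: mult_at_def)
  then show "\<exists>N. \<forall>a<N. mult_at scale c 0 (Suc j) X (a # t) = 0" by blast
qed

lemma act_second_Cons_Cons:
  assumes q: "\<forall>d1 d2. q d1 d2 \<noteq> 0 \<longrightarrow> d2 = - d1 \<and> L \<le> d1"
    and u: "\<forall>n. Vector_Spaces.linear scale scale (u n)"
    and X: "\<forall>e. M < e \<longrightarrow> X ((m0 - e) # t) = 0"
  shows "act_second scale u q X (m0 # m1 # t) =
    (\<Sum>e\<in>{L..M}. scale (q e (- e)) (u (m1 + e) (X ((m0 - e) # t))))"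
  unfolding act_second_def
  using mult2_antidiag[OF q, of M "\<lambda>a b. u b (X (a # t))" m0 m1] X linear_zero u by simp

lemma mult_at_act_second:
  assumes c: "finite (support2 c)" and q: "\<forall>d1 d2. q d1 d2 \<noteq> 0 \<longrightarrow> d2 = - d1 \<and> L \<le> d1"
    and u: "\<forall>n. Vector_Spaces.linear scale scale (u n)"
    and X: "head_trunc n X" and ns: "length ns = Suc (Suc n)"
  shows "mult_at scale c 0 (Suc (Suc j)) (act_second scale u q X) ns =
    act_second scale u q (mult_at scale c 0 (Suc j) X) ns"
proof -
  obtain m0 m1 t where ns_eq: "ns = m0 # m1 # t" and t: "length t = n"
    using ns by (cases ns; cases "tl ns") auto
  define td where "td d = shift_exp t j (snd d)" for d :: "int \<times> int"
  have shift_X: "shift_exp2 (a # t) 0 (Suc j) d = (a - fst d) # td d" for a d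
    by (simp add: shift_exp2_def shift_exp_def td_def)
  have shift_ns: "shift_exp2 (m0 # m1 # t) 0 (Suc (Suc j)) d = (m0 - fst d) # m1 # td d" for d
    by (simp add: shift_exp2_def shift_exp_def td_def)
  obtain N where N: "\<forall>d\<in>support2 c. \<forall>a<N. X ((a - fst d) # td d) = 0"
    using head_trunc_shift_bound[OF c X t] unfolding td_def by blast
  define M where "M = m0 - N"
  have X0: "X ((m0 - e - fst d) # td d) = 0" "X ((m0 - fst d - e) # td d) = 0"
    if "M < e" "d \<in> support2 c" for e d
  proof -
    have "m0 - e < N" using that M_def by simp
    then show "X ((m0 - e - fst d) # td d) = 0" using N that by blast
    then show "X ((m0 - fst d - e) # td d) = 0" by (simp add: algebra_simps)
  qed
  have "mult_at scale c 0 (Suc (Suc j)) (act_second scale u q X) ns =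
      (\<Sum>d\<in>support2 c. scale (c (fst d) (snd d)) (act_second scale u q X ((m0 - fst d) # m1 # td d)))"
    by (simp add: mult_at_def ns_eq shift_ns)
  also have "\<dots> = (\<Sum>d\<in>support2 c. \<Sum>e\<in>{L..M}. scale (c (fst d) (snd d) * q e (- e))
        (u (m1 + e) (X ((m0 - fst d - e) # td d))))"
  proof (rule sum.cong[OF refl])
    fix d assume "d \<in> support2 c"
    then have "\<forall>e. M < e \<longrightarrow> X ((m0 - fst d - e) # td d) = 0"
      using X0(2) by blast
    then show "scale (c (fst d) (snd d)) (act_second scale u q X ((m0 - fst d) # m1 # td d)) =
      (\<Sum>e\<in>{L..M}. scale (c (fst d) (snd d) * q e (- e)) (u (m1 + e) (X ((m0 - fst d - e) # td d))))"
      by (simp add: act_second_Cons_Cons[OF q u] scale_sum_right)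
  qed
  also have "\<dots> = (\<Sum>e\<in>{L..M}. scale (q e (- e)) (u (m1 + e) (mult_at scale c 0 (Suc j) X ((m0 - e) # t))))"
    by (subst sum.swap, rule sum.cong[OF refl])
       (simp add: mult_at_def shift_X linear_sum_scale[OF u[rule_format]] scale_sum_right
         mult.commute diff_diff_eq add.commute)
  also have "\<dots> = act_second scale u q (mult_at scale c 0 (Suc j) X) ns"
  proof -
    have "\<forall>e. M < e \<longrightarrow> mult_at scale c 0 (Suc j) X ((m0 - e) # t) = 0"
      using X0(1) by (simp add: mult_at_def shift_X)
    then show ?thesis unfolding ns_eq by (simp add: act_second_Cons_Cons[OF q u])
  qed
  finally show ?thesis .
qed

lemma mult_at_list_act_second:
  assumes c: "finite (support2 c)" and q: "\<forall>d1 d2. q d1 d2 \<noteq> 0 \<longrightarrow> d2 = - d1 \<and> L \<le> d1"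
    and u: "\<forall>n. Vector_Spaces.linear scale scale (u n)"
  shows "head_trunc n X \<Longrightarrow> \<forall>j\<in>set js. 1 \<le> j \<Longrightarrow>
    agree_len (Suc (Suc n)) (mult_at_list scale c (map (\<lambda>j. (0, Suc j)) js) (act_second scale u q X))
      (act_second scale u q (mult_at_list scale c (map (\<lambda>j. (0, j)) js) X))"
proof (induction js arbitrary: X)
  case (Cons j js)
  obtain j' where j: "j = Suc j'" using Cons.prems(2) by (cases j) auto
  have "agree_len (Suc (Suc n)) (mult_at scale c 0 (Suc j) (act_second scale u q X))
      (act_second scale u q (mult_at scale c 0 j X))"
    unfolding agree_len_def j using mult_at_act_second[OF c q u Cons.prems(1)] by blast
  then have "agree_len (Suc (Suc n))
      (mult_at_list scale c (map (\<lambda>j. (0, Suc j)) js) (mult_at scale c 0 (Suc j) (act_second scale u q X)))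
      (mult_at_list scale c (map (\<lambda>j. (0, Suc j)) js) (act_second scale u q (mult_at scale c 0 j X)))"
    by (rule agree_len_mult_at_list)
  moreover have "agree_len (Suc (Suc n))
      (mult_at_list scale c (map (\<lambda>j. (0, Suc j)) js) (act_second scale u q (mult_at scale c 0 j X)))
      (act_second scale u q (mult_at_list scale c (map (\<lambda>j. (0, j)) js) (mult_at scale c 0 j X)))"
    using Cons.IH head_trunc_mult_at[OF c Cons.prems(1)] Cons.prems(2) j by auto
  ultimately show ?case by (simp add: agree_len_def)
qed (simp add: agree_len_def)

lemma trunc_at_act_second:
  assumes q: "\<forall>d1 d2. q d1 d2 \<noteq> 0 \<longrightarrow> d2 = - d1 \<and> L \<le> d1"
    and u: "\<forall>n. Vector_Spaces.linear scale scale (u n)"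
    and K: "trunc_at (Suc n) 0 K"
  shows "trunc_at (Suc (Suc n)) 0 (act_second scale u q K)"
proof -
  obtain N where N: "\<forall>ns. length ns = Suc n \<longrightarrow> ns ! 0 < N \<longrightarrow> K ns = 0"
    using K by (auto simp: trunc_at_def)
  have "act_second scale u q K (m0 # m1 # t) = 0" if "length t = n" "m0 < N + L" for m0 m1 t
  proof -
    have "\<forall>e. m0 - N < e \<longrightarrow> K ((m0 - e) # t) = 0" using N that by auto
    then show ?thesis using that by (simp add: act_second_Cons_Cons[OF q u])
  qed
  then show ?thesis
    unfolding trunc_at_def
    by (metis (no_types, lifting) length_Suc_conv nth_Cons_0)
qed

lemma trunc_at_act_second_head_pairs:
  assumes c: "finite (support2 c)" and q: "antidiag_bounded_below q"
    and u: "\<forall>n. Vector_Spaces.linear scale scale (u n)"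
    and X: "head_trunc n X" and trunc: "trunc_at (Suc n) 0 (mult_head_pairs scale c (Suc n) X)"
  shows "trunc_at (Suc (Suc n)) 0
    (mult_at_list scale c (map (\<lambda>j. (0, Suc j)) [1..<Suc n]) (act_second scale u q X))"
proof -
  obtain L where L: "\<forall>d1 d2. q d1 d2 \<noteq> 0 \<longrightarrow> d2 = - d1 \<and> L \<le> d1"
    using q unfolding antidiag_bounded_below_def by blast
  have "agree_len (Suc (Suc n)) (act_second scale u q (mult_head_pairs scale c (Suc n) X))
      (mult_at_list scale c (map (\<lambda>j. (0, Suc j)) [1..<Suc n]) (act_second scale u q X))"
    unfolding mult_head_pairs_def
    by (rule agree_len_sym, rule mult_at_list_act_second[OF c L u X]) auto
  moreover have "trunc_at (Suc (Suc n)) 0 (act_second scale u q (mult_head_pairs scale c (Suc n) X))"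
    by (rule trunc_at_act_second[OF L u trunc])
  ultimately show ?thesis by (rule trunc_at_agree_len)
qed

lemma mult_at_01_exchange:
  fixes r :: nat
  assumes c0: "finite (support2 c0)"
    and exchange: "\<forall>w m1 m2. mult2 scale c0 (prod12 a b w) m1 m2 =
        mult2 scale c0 (\<lambda>n1 n2. \<Sum>k<r. mult2 scale (q k) (prod21 (u k) (v k) w) n1 n2) m1 m2"
  shows "agree_len (Suc (Suc (length rest))) (mult_at scale c0 0 1 (prodr (a # b # rest) w))
    (mult_at scale c0 0 1 (\<lambda>ns. \<Sum>k<r. act_second scale (u k) (q k) (prodr (v k # rest) w) ns))"
  unfolding agree_len_def
proof (intro allI impI)
  fix ns :: "int list" assume "length ns = Suc (Suc (length rest))"
  then obtain m0 m1 t where ns: "ns = m0 # m1 # t" by (cases ns; cases "tl ns") auto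
  have "(\<lambda>x y. prodr (a # b # rest) w (x # y # t)) = prod12 a b (prodr rest w t)"
    by (intro ext) (simp add: prod12_def)
  moreover have "(\<lambda>x y. \<Sum>k<r. act_second scale (u k) (q k) (prodr (v k # rest) w) (x # y # t)) =
      (\<lambda>n1 n2. \<Sum>k<r. mult2 scale (q k) (prod21 (u k) (v k) (prodr rest w t)) n1 n2)"
    by (simp add: act_second_def prod21_def[abs_def])
  ultimately show "mult_at scale c0 0 1 (prodr (a # b # rest) w) ns =
      mult_at scale c0 0 1 (\<lambda>ns. \<Sum>k<r. act_second scale (u k) (q k) (prodr (v k # rest) w) ns) ns"
    unfolding ns mult_at_01_eq_mult2[OF c0] using exchange by simp
qed

lemma trunc_at_head_pairs_exchange:
  fixes r :: nat
  assumes c: "finite (support2 c)" and c0: "finite (support2 c0)"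
    and factor: "\<And>G. mult_at scale c 0 1 G = mult_at scale e 0 1 (mult_at scale c0 0 1 G)"
    and exchange: "\<forall>w m1 m2. mult2 scale c0 (prod12 a b w) m1 m2 =
        mult2 scale c0 (\<lambda>n1 n2. \<Sum>k<r. mult2 scale (q k) (prod21 (u k) (v k) w) n1 n2) m1 m2"
    and uvq: "\<forall>k<r. u k \<in> EW scale \<and> v k \<in> EW scale \<and> antidiag_bounded_below (q k)"
    and trunc: "\<forall>k<r. trunc_at (Suc (length rest)) 0
        (mult_head_pairs scale c (Suc (length rest)) (prodr (v k # rest) w))"
  shows "trunc_at (Suc (Suc (length rest))) 0
    (mult_head_pairs scale c (Suc (Suc (length rest))) (prodr (a # b # rest) w))"
proof -
  let ?n = "Suc (Suc (length rest))" and ?G = "prodr (a # b # rest) w"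
  let ?tail = "map (\<lambda>j. (0, Suc j)) [1..<Suc (length rest)]"
  define H where "H = (\<lambda>ns. \<Sum>k<r. act_second scale (u k) (q k) (prodr (v k # rest) w) ns)"
  have "agree_len ?n (mult_at scale c 0 1 ?G) (mult_at scale c 0 1 H)"
    unfolding factor H_def by (rule agree_len_mult_at[OF mult_at_01_exchange[OF c0 exchange]])
  then have agree: "agree_len ?n (mult_head_pairs scale c ?n ?G) (mult_at scale c 0 1 (mult_at_list scale c ?tail H))"
    by (simp add: mult_head_pairs_Suc_Suc agree_len_mult_at_list mult_at_mult_at_list_commute)
  have "trunc_at ?n 0 (mult_at_list scale c ?tail (act_second scale (u k) (q k) (prodr (v k # rest) w)))"
    if "k < r" for k
    using uvq trunc that
    by (intro trunc_at_act_second_head_pairs[OF c] head_trunc_prodr) (auto simp: EW_def)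
  then have "trunc_at ?n 0 (mult_at_list scale c ?tail H)"
    unfolding H_def mult_at_list_sum by (intro trunc_at_sum) simp_all
  then show ?thesis
    using trunc_at_mult_at[OF c] trunc_at_agree_len[OF agree_len_sym[OF agree]] by blast
qed

lemma trunc_at_index_pairs_Cons:
  assumes c: "finite (support2 c)" and a: "\<forall>n. Vector_Spaces.linear scale scale (a n)"
    and head: "trunc_at (Suc (length bs)) 0 (mult_head_pairs scale c (Suc (length bs)) (prodr (a # bs) w))"
    and tail: "\<forall>l<length bs. trunc_at (length bs) l
        (mult_at_list scale c (index_pairs (length bs)) (prodr bs w))"
  shows "\<forall>l<Suc (length bs). trunc_at (Suc (length bs)) l
    (mult_at_list scale c (index_pairs (Suc (length bs))) (prodr (a # bs) w))"
proof (intro allI impI)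
  fix l assume l: "l < Suc (length bs)"
  let ?n = "length bs" and ?G = "prodr (a # bs) w"
  let ?shifted = "map (\<lambda>p. (Suc (fst p), Suc (snd p))) (index_pairs ?n)"
  show "trunc_at (Suc ?n) l (mult_at_list scale c (index_pairs (Suc ?n)) ?G)"
  proof (cases l)
    case 0
    then show ?thesis
      unfolding mult_index_pairs_Suc using trunc_at_mult_at_list[OF c head] by simp
  next
    case (Suc l')
    have "agree_len (Suc ?n) ?G (act_head a (prodr bs w))"
      unfolding agree_len_def by (auto simp: act_head_def length_Suc_conv)
    then have "agree_len (Suc ?n) (act_head a (mult_at_list scale c (index_pairs ?n) (prodr bs w)))
        (mult_at_list scale c ?shifted ?G)"
      by (simp add: agree_len_sym agree_len_mult_at_list mult_at_list_Suc_act_head[OF a, symmetric])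
    moreover have "trunc_at (Suc ?n) l (act_head a (mult_at_list scale c (index_pairs ?n) (prodr bs w)))"
      using trunc_at_act_head[OF a] tail l Suc by simp
    ultimately have "trunc_at (Suc ?n) l (mult_at_list scale c ?shifted ?G)"
      by (rule trunc_at_agree_len)
    then show ?thesis
      unfolding mult_index_pairs_Suc mult_head_pairs_def mult_at_list_commute[of c _ c]
      by (rule trunc_at_mult_at_list[OF c])
  qed
qed

end

section \<open>Directed families of multipliers\<close>

lemma antidiag_bounded_below_iota21: "antidiag_bounded_below (iota21 f g)"
  unfolding antidiag_bounded_below_def
  by (intro exI[of _ "fls_subdegree (rat_expand f g)"])
     (auto simp: iota21_def intro: fls_subdegree_leI split: if_splits)

locale multiplier_family = complex_vector_space scale
  for scale :: "complex \<Rightarrow> 'w::ab_group_add \<Rightarrow> 'w" +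
  fixes I :: "'i set" and le :: "'i \<Rightarrow> 'i \<Rightarrow> bool" and C :: "'i \<Rightarrow> int \<Rightarrow> int \<Rightarrow> complex"
  assumes finite_support: "i \<in> I \<Longrightarrow> finite (support2 (C i))"
    and le_refl: "i \<in> I \<Longrightarrow> le i i"
    and le_trans: "i \<in> I \<Longrightarrow> j \<in> I \<Longrightarrow> k \<in> I \<Longrightarrow> le i j \<Longrightarrow> le j k \<Longrightarrow> le i k"
    and directed: "i \<in> I \<Longrightarrow> j \<in> I \<Longrightarrow> \<exists>k\<in>I. le i k \<and> le j k"
    and factor: "i \<in> I \<Longrightarrow> j \<in> I \<Longrightarrow> le i j \<Longrightarrow>
       \<exists>e. \<forall>p q G. mult_at scale (C j) p q G = mult_at scale e p q (mult_at scale (C i) p q G)"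
    and nonempty: "I \<noteq> {}"
begin

definition large_index :: "'i filter" where
  "large_index = (INF i\<in>I. principal {j\<in>I. le i j})"

lemma eventually_large_index: "eventually P large_index \<longleftrightarrow> (\<exists>i\<in>I. \<forall>j\<in>I. le i j \<longrightarrow> P j)"
proof -
  have "\<exists>k\<in>I. principal {j\<in>I. le k j} \<le> inf (principal {j\<in>I. le i j}) (principal {j\<in>I. le i' j})"
    if ii': "i \<in> I" "i' \<in> I" for i i'
  proof -
    obtain k where k: "k \<in> I" "le i k" "le i' k" using directed[OF ii'] by blast
    then have "{j\<in>I. le k j} \<subseteq> {j\<in>I. le i j} \<inter> {j\<in>I. le i' j}"
      using le_trans[OF ii'(1) k(1)] le_trans[OF ii'(2) k(1)] by blast
    then show ?thesis using k(1) by (auto simp: inf_principal)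
  qed
  then show ?thesis
    unfolding large_index_def
    by (subst eventually_INF_base) (auto simp: nonempty eventually_principal)
qed

lemma eventually_ge_index: "i0 \<in> I \<Longrightarrow> eventually (\<lambda>i. i \<in> I \<and> le i0 i) large_index"
  by (auto simp: eventually_large_index)

definition exchange_local :: "'w fser set \<Rightarrow> bool" where
  "exchange_local U \<longleftrightarrow> (\<forall>a\<in>U. \<forall>b\<in>U. \<exists>i\<in>I. \<exists>(r::nat) u v q.
     (\<forall>k<r. u k \<in> U \<and> v k \<in> U \<and> antidiag_bounded_below (q k)) \<and>
     (\<forall>w m1 m2. mult2 scale (C i) (prod12 a b w) m1 m2 =
        mult2 scale (C i) (\<lambda>n1 n2. \<Sum>k<r. mult2 scale (q k) (prod21 (u k) (v k) w) n1 n2) m1 m2))"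

lemma exchange_localI:
  assumes "\<And>a b. a \<in> U \<Longrightarrow> b \<in> U \<Longrightarrow> \<exists>i\<in>I. \<exists>(r::nat) u v f g. (\<forall>k<r. u k \<in> U \<and> v k \<in> U) \<and>
     (\<forall>w m1 m2. mult2 scale (C i) (prod12 a b w) m1 m2 = mult2 scale (C i)
        (\<lambda>n1 n2. \<Sum>k<r. mult2 scale (iota21 (f k) (g k)) (prod21 (u k) (v k) w) n1 n2) m1 m2)"
  shows "exchange_local U"
  unfolding exchange_local_def
proof (intro ballI)
  fix a b assume "a \<in> U" "b \<in> U"
  from assms[OF this] obtain i and r :: nat and u v f g where "i \<in> I" "\<forall>k<r. u k \<in> U \<and> v k \<in> U"
    and "\<forall>w m1 m2. mult2 scale (C i) (prod12 a b w) m1 m2 = mult2 scale (C i)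
        (\<lambda>n1 n2. \<Sum>k<r. mult2 scale (iota21 (f k) (g k)) (prod21 (u k) (v k) w) n1 n2) m1 m2"
    by (elim bexE exE conjE) (rule that; assumption)
  then show "\<exists>i\<in>I. \<exists>(r::nat) u v q. (\<forall>k<r. u k \<in> U \<and> v k \<in> U \<and> antidiag_bounded_below (q k)) \<and>
      (\<forall>w m1 m2. mult2 scale (C i) (prod12 a b w) m1 m2 =
        mult2 scale (C i) (\<lambda>n1 n2. \<Sum>k<r. mult2 scale (q k) (prod21 (u k) (v k) w) n1 n2) m1 m2)"
    by (intro bexI[of _ i] exI[of _ r] exI[of _ u] exI[of _ v] exI[of _ "\<lambda>k. iota21 (f k) (g k)"] conjI)
       (simp_all add: antidiag_bounded_below_iota21)
qed

lemma eventually_trunc_at_head: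
  assumes U: "U \<subseteq> EW scale" "exchange_local U"
  shows "set (a # bs) \<subseteq> U \<Longrightarrow> eventually (\<lambda>i. \<forall>w. trunc_at (length (a # bs)) 0
    (mult_head_pairs scale (C i) (length (a # bs)) (prodr (a # bs) w))) large_index"
proof (induction bs arbitrary: a)
  case Nil
  then have "a \<in> EW scale" using U(1) by auto
  then show ?case using trunc_at_prodr_single by (simp add: mult_head_pairs_def)
next
  case (Cons b rest)
  then have ab: "a \<in> U" "b \<in> U" and rest: "set rest \<subseteq> U" by auto
  obtain i0 and r :: nat and u v q where i0: "i0 \<in> I"
    and uvq: "\<forall>k<r. u k \<in> U \<and> v k \<in> U \<and> antidiag_bounded_below (q k)"
    and exchange: "\<forall>w m1 m2. mult2 scale (C i0) (prod12 a b w) m1 m2 =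
        mult2 scale (C i0) (\<lambda>n1 n2. \<Sum>k<r. mult2 scale (q k) (prod21 (u k) (v k) w) n1 n2) m1 m2"
    using U(2)[unfolded exchange_local_def, rule_format, OF ab]
    by (elim bexE exE conjE) (rule that; assumption)
  have "\<forall>k\<in>{..<r}. eventually (\<lambda>i. \<forall>w. trunc_at (Suc (length rest)) 0
      (mult_head_pairs scale (C i) (Suc (length rest)) (prodr (v k # rest) w))) large_index"
  proof
    fix k assume "k \<in> {..<r}"
    then have "set (v k # rest) \<subseteq> U" using uvq rest by auto
    then show "eventually (\<lambda>i. \<forall>w. trunc_at (Suc (length rest)) 0
      (mult_head_pairs scale (C i) (Suc (length rest)) (prodr (v k # rest) w))) large_index"
      using Cons.IH by simp
  qed
  then have "eventually (\<lambda>i. \<forall>k\<in>{..<r}. \<forall>w. trunc_at (Suc (length rest)) 0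
      (mult_head_pairs scale (C i) (Suc (length rest)) (prodr (v k # rest) w))) large_index"
    by (intro eventually_ball_finite) simp_all
  moreover note eventually_ge_index[OF i0]
  ultimately show ?case
  proof eventually_elim
    case (elim i)
    then have i: "i \<in> I" "le i0 i" by auto
    obtain e where e: "\<And>G. mult_at scale (C i) 0 1 G = mult_at scale e 0 1 (mult_at scale (C i0) 0 1 G)"
      using factor[OF i0 i] by blast
    have "\<forall>k<r. u k \<in> EW scale \<and> v k \<in> EW scale \<and> antidiag_bounded_below (q k)"
      using uvq U(1) by blast
    then show ?case
      using trunc_at_head_pairs_exchange[OF finite_support[OF i(1)] finite_support[OF i0] e exchange] elim
      by simp
  qed
qed

lemma eventually_trunc_at_all:
  assumes U: "U \<subseteq> EW scale" "exchange_local U"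
  shows "set as \<subseteq> U \<Longrightarrow> eventually (\<lambda>i. \<forall>w. \<forall>l<length as. trunc_at (length as) l
    (mult_at_list scale (C i) (index_pairs (length as)) (prodr as w))) large_index"
proof (induction as)
  case (Cons a bs)
  have "eventually (\<lambda>i. i \<in> I) large_index"
    using nonempty by (auto simp: eventually_large_index)
  moreover note eventually_trunc_at_head[OF U Cons.prems]
  moreover have "eventually (\<lambda>i. \<forall>w. \<forall>l<length bs. trunc_at (length bs) l
      (mult_at_list scale (C i) (index_pairs (length bs)) (prodr bs w))) large_index"
    using Cons by simp
  ultimately show ?case
  proof eventually_elim
    case (elim i)
    have a: "\<forall>n. Vector_Spaces.linear scale scale (a n)" using Cons.prems U(1) by (auto simp: EW_def)
    show ?case
    proof
      fix w
      show "\<forall>l<length (a # bs). trunc_at (length (a # bs)) l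
          (mult_at_list scale (C i) (index_pairs (length (a # bs))) (prodr (a # bs) w))"
        using trunc_at_index_pairs_Cons[OF finite_support[OF elim(1)] a] elim(2,3) by simp
    qed
  qed
qed simp

lemma exchange_local_imp_trunc_at:
  assumes "U \<subseteq> EW scale" "exchange_local U" "set as \<subseteq> U"
  shows "\<exists>i\<in>I. \<forall>w. \<forall>l<length as. trunc_at (length as) l
    (mult_at_list scale (C i) (index_pairs (length as)) (prodr as w))"
proof -
  obtain i where "i \<in> I" and "\<forall>j\<in>I. le i j \<longrightarrow> (\<forall>w. \<forall>l<length as. trunc_at (length as) l
      (mult_at_list scale (C j) (index_pairs (length as)) (prodr as w)))"
    using eventually_trunc_at_all[OF assms] unfolding eventually_large_index by blast
  then show ?thesis using le_refl by blast
qed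

end

section \<open>The multipliers (x_1 - x_2)^k and p(x_1/x_2)\<close>

lemma binom2_Suc: "binom2 (Suc m) f1 f2 = binom2 m (f1 - 1) f2 - binom2 m f1 (f2 - 1)"
proof (cases "0 \<le> f1 \<and> 0 \<le> f2 \<and> f1 + f2 = int (Suc m)")
  case False
  then show ?thesis by (auto simp: binom2_def)
next
  case True
  then obtain b where b: "f2 = int b" by (metis nonneg_int_cases)
  show ?thesis
  proof (cases b)
    case 0
    then show ?thesis using True b by (simp add: binom2_def)
  next
    case (Suc b')
    then have "f1 = int m - int b'" "nat f2 = Suc b'" "nat (f2 - 1) = b'"
      using True b by auto
    moreover have "b' \<le> m" using True b Suc by linarith
    ultimately show ?thesis
      using b Suc by (cases "b' < m") (auto simp: binom2_def algebra_simps)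
  qed
qed

lemma support2_binom2_0: "support2 (binom2 0) = {(0, 0)}"
  by (auto simp: support2_def binom2_def)

lemma support2_binom2_1: "support2 (binom2 1) = {(1, 0), (0, 1)}"
proof -
  have "binom2 1 d1 d2 \<noteq> 0 \<longleftrightarrow> (d1 = 1 \<and> d2 = 0) \<or> (d1 = 0 \<and> d2 = 1)" for d1 d2
    by (auto simp: binom2_def)
  then show ?thesis by (auto simp: support2_def)
qed

lemma finite_support2_binom2: "finite (support2 (binom2 k))"
proof -
  have "support2 (binom2 k) \<subseteq> {0..int k} \<times> {0..int k}"
    by (auto simp: support2_def binom2_def split: if_splits)
  then show ?thesis by (rule finite_subset) auto
qed

lemma conv2_binom2_1: "conv2 (binom2 1) (binom2 m) = binom2 (Suc m)"
proof (intro ext)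
  fix f1 f2
  have b10: "binom2 1 1 0 = 1" and b01: "binom2 1 0 1 = -1" by (simp_all add: binom2_def)
  have "conv2 (binom2 1) (binom2 m) f1 f2 =
      binom2 1 1 0 * binom2 m (f1 - 1) (f2 - 0) + binom2 1 0 1 * binom2 m (f1 - 0) (f2 - 1)"
    unfolding conv2_def support2_binom2_1 by simp
  also have "\<dots> = binom2 m (f1 - 1) f2 - binom2 m f1 (f2 - 1)"
    by (simp only: b10 b01) simp
  finally show "conv2 (binom2 1) (binom2 m) f1 f2 = binom2 (Suc m) f1 f2"
    by (simp only: binom2_Suc)
qed

context complex_vector_space
begin

lemma mult_at_binom2_0: "mult_at scale (binom2 0) p q G = G"
  by (rule ext) (simp add: mult_at_def support2_binom2_0, simp add: binom2_def)

lemma mult_at_binom2_add: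
  "mult_at scale (binom2 (m + k)) p q G = mult_at scale (binom2 m) p q (mult_at scale (binom2 k) p q G)"
proof (induction m arbitrary: G)
  case 0
  show ?case by (simp add: mult_at_binom2_0)
next
  case (Suc m)
  have "mult_at scale (binom2 (Suc m + k)) p q G = mult_at scale (conv2 (binom2 1) (binom2 (m + k))) p q G"
    by (simp only: conv2_binom2_1 add_Suc)
  also have "\<dots> = mult_at scale (binom2 1) p q (mult_at scale (binom2 m) p q (mult_at scale (binom2 k) p q G))"
    by (simp only: mult_at_mult_at[symmetric] finite_support2_binom2 Suc)
  also have "\<dots> = mult_at scale (binom2 (Suc m)) p q (mult_at scale (binom2 k) p q G)"
    by (subst mult_at_mult_at) (simp_all only: finite_support2_binom2 conv2_binom2_1)
  finally show ?case .
qed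

end

lemma multiplier_family_binom2:
  assumes "vector_space scale"
  shows "multiplier_family scale (UNIV :: nat set) (\<le>) binom2"
proof -
  interpret complex_vector_space scale by (rule complex_vector_space.intro[OF assms])
  show ?thesis
  proof unfold_locales
    fix i j :: nat assume "i \<le> j"
    then have "j = (j - i) + i" by simp
    then show "\<exists>e. \<forall>p q G. mult_at scale (binom2 j) p q G = mult_at scale e p q (mult_at scale (binom2 i) p q G)"
      by (metis mult_at_binom2_add)
  qed (simp_all add: finite_support2_binom2, presburger)
qed

lemma strig_local_imp_compatible_set:
  assumes vs: "vector_space scale" and U: "U \<subseteq> EW scale" "strig_local scale U"
  shows "compatible_set scale U"
proof -
  interpret multiplier_family scale "UNIV :: nat set" "(\<le>)" binom2
    by (rule multiplier_family_binom2[OF vs])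
  have "exchange_local U"
  proof (rule exchange_localI, goal_cases)
    case (1 a b)
    from U(2)[unfolded strig_local_def, rule_format, OF 1] show ?case
      by (elim exE conjE) (rule bexI, (rule exI)+, rule conjI[rotated], assumption, blast+)
  qed
  show ?thesis
    unfolding compatible_set_def compatible_seq_def
  proof (intro allI impI)
    fix as assume "set as \<subseteq> U"
    then obtain k where "\<forall>w. \<forall>l<length as. trunc_at (length as) l
        (mult_at_list scale (binom2 k) (index_pairs (length as)) (prodr as w))"
      using exchange_local_imp_trunc_at[OF U(1) \<open>exchange_local U\<close>] by blast
    then show "\<exists>k. lower_trunc (length as) (\<lambda>w. mult_all_pairs scale (binom2 k) (length as) (prodr as w))"
      by (auto simp: lower_trunc_iff_trunc_at mult_all_pairs_eq_mult_at_list finite_support2_binom2)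
  qed
qed

lemma support2_polyz: "support2 (polyz p) \<subseteq> (\<lambda>n. (int n, - int n)) ` {..degree p}"
proof
  fix d assume "d \<in> support2 (polyz p)"
  then have d: "0 \<le> fst d" "snd d = - fst d" "coeff p (nat (fst d)) \<noteq> 0"
    by (auto simp: support2_def polyz_def split: if_splits)
  then have "nat (fst d) \<le> degree p" using le_degree by blast
  then show "d \<in> (\<lambda>n. (int n, - int n)) ` {..degree p}"
    using d by (intro image_eqI[of _ _ "nat (fst d)"]) (auto simp: prod_eq_iff)
qed

lemma finite_support2_polyz: "finite (support2 (polyz p))"
  using support2_polyz by (rule finite_subset) simp

lemma conv2_polyz: "conv2 (polyz p) (polyz q) = polyz (p * q)"
proof (intro ext)
  fix f1 f2
  have "conv2 (polyz p) (polyz q) f1 f2 = (\<Sum>n\<le>degree p. coeff p n * polyz q (f1 - int n) (f2 + int n))"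
    by (subst conv2_superset[OF _ support2_polyz])
       (auto simp: sum.reindex inj_on_def polyz_def intro!: sum.cong)
  also have "\<dots> = polyz (p * q) f1 f2"
  proof (cases "0 \<le> f1 \<and> f2 = - f1")
    case True
    then obtain m where m: "f1 = int m" by (metis nonneg_int_cases)
    let ?h = "\<lambda>n. coeff p n * (if n \<le> m then coeff q (m - n) else 0)"
    have "(\<Sum>n\<le>degree p. coeff p n * polyz q (f1 - int n) (f2 + int n)) = (\<Sum>n\<le>degree p. ?h n)"
      by (rule sum.cong) (use True m in \<open>auto simp: polyz_def nat_diff_distrib\<close>)
    also have "\<dots> = (\<Sum>n\<le>max (degree p) m. ?h n)"
      by (rule sum.mono_neutral_left) (auto simp: coeff_eq_0)
    also have "\<dots> = (\<Sum>n\<le>m. ?h n)"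
      by (rule sum.mono_neutral_right) auto
    also have "\<dots> = coeff (p * q) m" by (simp add: coeff_mult)
    finally show ?thesis using True m by (simp add: polyz_def)
  qed (auto simp: polyz_def)
  finally show "conv2 (polyz p) (polyz q) f1 f2 = polyz (p * q) f1 f2" .
qed

lemma multiplier_family_polyz:
  assumes "vector_space scale"
  shows "multiplier_family scale {p :: complex poly. p \<noteq> 0} (dvd) polyz"
proof -
  interpret complex_vector_space scale by (rule complex_vector_space.intro[OF assms])
  show ?thesis
  proof unfold_locales
    fix i j :: "complex poly" assume "i dvd j"
    then obtain k where "j = k * i" by (metis dvd_def mult.commute)
    then have "mult_at scale (polyz j) p q G = mult_at scale (polyz k) p q (mult_at scale (polyz i) p q G)"
      for p q G
      by (simp add: mult_at_mult_at finite_support2_polyz conv2_polyz)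
    then show "\<exists>e. \<forall>p q G. mult_at scale (polyz j) p q G = mult_at scale e p q (mult_at scale (polyz i) p q G)"
      by blast
  next
    fix i j :: "complex poly" assume "i \<in> {p. p \<noteq> 0}" "j \<in> {p. p \<noteq> 0}"
    then show "\<exists>k\<in>{p. p \<noteq> 0}. i dvd k \<and> j dvd k" by (intro bexI[of _ "i * j"]) auto
  qed (auto simp: finite_support2_polyz intro: dvd_trans exI[of _ 1])
qed

definition pow_x2 :: "nat \<Rightarrow> int \<Rightarrow> int \<Rightarrow> complex" where
  "pow_x2 D d1 d2 = (if d1 = 0 \<and> d2 = int D then 1 else 0)"

lemma support2_pow_x2: "support2 (pow_x2 D) = {(0, int D)}"
  by (auto simp: support2_def pow_x2_def)

text \<open>x_2^(deg Q) Q(x_1/x_2) is the homogenization of Q, a polynomial in x_1, x_2.\<close>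

lemma pser2_homogenization:
  "pser2 (\<lambda>a b. if a + b = degree Q then coeff Q a else 0) = conv2 (pow_x2 (degree Q)) (polyz Q)"
proof (intro ext)
  fix f1 f2
  have "conv2 (pow_x2 (degree Q)) (polyz Q) f1 f2 = polyz Q f1 (f2 - int (degree Q))"
    by (simp add: conv2_def support2_pow_x2 pow_x2_def)
  moreover have "coeff Q (nat f1) = 0" if "0 \<le> f1" "f2 < 0" "f2 - int (degree Q) = - f1"
    using that by (intro coeff_eq_0) linarith
  ultimately show "pser2 (\<lambda>a b. if a + b = degree Q then coeff Q a else 0) f1 f2 =
      conv2 (pow_x2 (degree Q)) (polyz Q) f1 f2"
    by (auto simp: pser2_def polyz_def)
qed

lemma quasi_strig_local_imp_quasi_compatible_set:
  assumes vs: "vector_space scale" and U: "U \<subseteq> EW scale" "quasi_strig_local scale U"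
  shows "quasi_compatible_set scale U"
proof -
  interpret multiplier_family scale "{p :: complex poly. p \<noteq> 0}" "(dvd)" polyz
    by (rule multiplier_family_polyz[OF vs])
  have "exchange_local U"
  proof (rule exchange_localI, goal_cases)
    case (1 a b)
    from U(2)[unfolded quasi_strig_local_def, rule_format, OF 1] show ?case
      by (elim exE conjE) (rule bexI, (rule exI)+, rule conjI[rotated], assumption, blast+)
  qed
  show ?thesis
    unfolding quasi_compatible_set_def quasi_compatible_seq_def
  proof (intro allI impI)
    fix as assume "set as \<subseteq> U"
    then obtain Q :: "complex poly" where Q: "Q \<noteq> 0" and trunc: "\<forall>w. \<forall>l<length as. trunc_at (length as) l
        (mult_at_list scale (polyz Q) (index_pairs (length as)) (prodr as w))"
      using exchange_local_imp_trunc_at[OF U(1) \<open>exchange_local U\<close>] by blast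
    define P where "P = (\<lambda>a b. if a + b = degree Q then coeff Q a else 0)"
    have fin: "finite (support2 (pow_x2 (degree Q)))" by (simp add: support2_pow_x2)
    then have "finite (support2 (pser2 P))"
      unfolding P_def pser2_homogenization by (rule finite_support2_conv2[OF _ finite_support2_polyz])
    moreover have "\<forall>w. \<forall>l<length as. trunc_at (length as) l
        (mult_at_list scale (pser2 P) (index_pairs (length as)) (prodr as w))"
      using trunc unfolding P_def pser2_homogenization
      by (simp add: mult_at_list_mult_at_list[symmetric] fin finite_support2_polyz trunc_at_mult_at_list)
    moreover have "P (degree Q) 0 \<noteq> 0" using Q by (simp add: P_def)
    ultimately show "\<exists>p. (\<exists>a b. p a b \<noteq> 0) \<and>
        lower_trunc (length as) (\<lambda>w. mult_all_pairs scale (pser2 p) (length as) (prodr as w))"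
      by (intro exI[of _ P]) (auto simp: lower_trunc_iff_trunc_at mult_all_pairs_eq_mult_at_list)
  qed
qed

theorem lemma5p2:
  fixes scale :: "complex \<Rightarrow> 'w::ab_group_add \<Rightarrow> 'w"
  assumes "vector_space scale"
  shows "(\<forall>U. U \<subseteq> EW scale \<and> strig_local scale U \<longrightarrow> compatible_set scale U) \<and>
         (\<forall>U. U \<subseteq> EW scale \<and> quasi_strig_local scale U \<longrightarrow> quasi_compatible_set scale U)"
  using strig_local_imp_compatible_set[OF assms] quasi_strig_local_imp_quasi_compatible_set[OF assms]
  by blast

end
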